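(* Let $\alpha>-1$, let $\hat L^\alpha_n$ be the monic Laguerre polynomials, and let $(\rho_n)_{n\ge0}$ be positive real numbers such that for some $\nu>0$ $$\frac{\rho_{n-1}}{\rho_n}\le\nu,\quad n\ge1.$$ Let $K$ be a positive integer and $\gamma_0,\dots,\gamma_K$ real numbers with $\gamma_0=1$, $\gamma_K\neq0$. Then the polynomial $$q_n(x)=\sum_{j=0}^K\gamma_j\rho_{n-j}\hat L^\alpha_{n-j}(x)$$ has only real and simple zeros for $$n\ge\max\left\{\frac18\left(23\nu\,2^{K-1}\frac{(23\nu)^{K-1}-1}{23\nu-1}\Gamma_2-2|\alpha|\right),\ \frac{\nu-\alpha+1}{2},\ \alpha+9,\ 2K\right\},$$ where $\Gamma_2=\max\{|\gamma_j|:2\le j\le K\}$, and these zeros interlace the zeros of $L^\alpha_{n-1}$. Moreover, for $n$ sufficiently large all the zeros of $q_n$ are positive.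
   Context: $L^\alpha_n$ is the Laguerre polynomial of degree $n$, orthogonal with respect to $x^\alpha e^{-x}dx$ on $(0,\infty)$, and $\hat L^\alpha_n=(-1)^nn!L^\alpha_n$ is its monic version; they satisfy $x\hat L^\alpha_n=\hat L^\alpha_{n+1}+(2n+\alpha+1)\hat L^\alpha_n+n(n+\alpha)\hat L^\alpha_{n-1}$. When $23\nu=1$ the quotient $\frac{(23\nu)^{K-1}-1}{23\nu-1}$ is read as $\sum_{j=0}^{K-2}(23\nu)^j$. Interlacing: given two finite sets $U,V$ of reals, $U$ interlaces $V$ if $\min U<\min V$ and between any two consecutive elements of either set there is an element of the other; here $U$ is the zero set of $q_n$ and $V$ that of $L^\alpha_{n-1}$. *)

theory Defs
  imports "HOL-Computational_Algebra.Polynomial" Complex_Main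
begin

definition laguerre :: "real \<Rightarrow> nat \<Rightarrow> real poly" where
  "laguerre \<alpha> n = (\<Sum>k\<le>n. monom (((of_nat n + \<alpha>) gchoose (n - k)) * (-1) ^ k / fact k) k)"

definition monic_laguerre :: "real \<Rightarrow> nat \<Rightarrow> real poly" where
  "monic_laguerre \<alpha> n = smult ((-1) ^ n * fact n) (laguerre \<alpha> n)"

definition interlaces :: "real set \<Rightarrow> real set \<Rightarrow> bool" where
  "interlaces U V \<longleftrightarrow> finite U \<and> finite V \<and> U \<noteq> {} \<and> V \<noteq> {} \<and> Min U < Min V \<and>
     (\<forall>a\<in>U. \<forall>b\<in>U. a < b \<and> \<not>(\<exists>c\<in>U. a < c \<and> c < b) \<longrightarrow> (\<exists>v\<in>V. a < v \<and> v < b)) \<and>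
     (\<forall>a\<in>V. \<forall>b\<in>V. a < b \<and> \<not>(\<exists>c\<in>V. a < c \<and> c < b) \<longrightarrow> (\<exists>u\<in>U. a < u \<and> u < b))"

text \<open>The quotient ((23 nu)^(K-1) - 1)/(23 nu - 1), read as a geometric sum when 23 nu = 1.\<close>
definition geom_quot :: "real \<Rightarrow> nat \<Rightarrow> real" where
  "geom_quot t K = (if t = 1 then (\<Sum>j<K - 1. t ^ j) else (t ^ (K - 1) - 1) / (t - 1))"

end

theory Submission
  imports Defs
begin

(*
  At a zero y of L_{n-1} the term j = 1 of q_n vanishes, and the three-term recurrence turns the
  term j = 0 into -\<rho>_n (n-1)(n-1+\<alpha>) L_{n-2}(y).  Running the recurrence backwards from y gives
  |L_{n-2-i}(y)| \<le> 2^i |L_{n-2}(y)|, so once n exceeds the stated bound the terms j \<ge> 2, weighted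
  by \<rho>_{n-j} \<le> \<nu>^j \<rho>_n, are dominated by the term j = 0.  Hence q_n has the sign of -L_{n-2} at
  the zeros of L_{n-1}, and these signs alternate because the zeros of L_{n-2} and L_{n-1}
  interlace.  So q_n, of degree n, has a zero in each gap between the zeros of L_{n-1} and one
  beyond each end: n simple real zeros interlacing those of L_{n-1}.  For large n,
  (-1)^n q_n(0) > 0 forces the smallest zero to be positive as well.
*)

section \<open>Coefficients and three-term recurrence of the monic Laguerre polynomials\<close>

definition monic_laguerre_coeff :: "real \<Rightarrow> nat \<Rightarrow> nat \<Rightarrow> real" where
  "monic_laguerre_coeff \<alpha> n k = (if k \<le> n then
     (-1) ^ (n + k) * (fact n / (fact k * fact (n - k))) * pochhammer (of_nat k + \<alpha> + 1) (n - k) else 0)"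

lemma coeff_monic_laguerre: "coeff (monic_laguerre \<alpha> n) k = monic_laguerre_coeff \<alpha> n k"
proof -
  have "coeff (laguerre \<alpha> n) k =
      (if k \<le> n then ((of_nat n + \<alpha>) gchoose (n - k)) * (-1) ^ k / fact k else 0)"
    unfolding laguerre_def coeff_sum coeff_monom by (auto simp: sum.delta)
  then show ?thesis
    unfolding monic_laguerre_def monic_laguerre_coeff_def gbinomial_pochhammer'
    by (auto simp: of_nat_diff power_add field_simps)
qed

lemma monic_laguerre_coeff_top [simp]: "monic_laguerre_coeff \<alpha> n n = 1"
  by (simp add: monic_laguerre_coeff_def)

lemma monic_laguerre_coeff_above: "n < k \<Longrightarrow> monic_laguerre_coeff \<alpha> n k = 0"
  by (simp add: monic_laguerre_coeff_def)

lemma monic_laguerre_coeff_0: "monic_laguerre_coeff \<alpha> m 0 = (-1) ^ m * pochhammer (\<alpha> + 1) m"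
  by (simp add: monic_laguerre_coeff_def)

lemma monic_laguerre_coeff_degree_step:
  "real (Suc n - k) * monic_laguerre_coeff \<alpha> (Suc n) k
     = - (real n + 1) * (real n + \<alpha> + 1) * monic_laguerre_coeff \<alpha> n k"
proof (cases "k \<le> n")
  case True
  define m where "m = n - k"
  have n: "n = k + m" and sn: "Suc n - k = Suc m"
    using True by (simp_all add: m_def)
  have poch: "pochhammer (real k + \<alpha> + 1) (Suc m) = pochhammer (real k + \<alpha> + 1) m * (real n + \<alpha> + 1)"
    by (simp add: pochhammer_Suc n algebra_simps)
  show ?thesis
    unfolding monic_laguerre_coeff_def sn poch using True
    by (simp add: n fact_Suc field_simps del: of_nat_Suc) (simp add: algebra_simps)
qed (simp add: monic_laguerre_coeff_def)

lemma monic_laguerre_coeff_index_step: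
  "real (n - k) * monic_laguerre_coeff \<alpha> n k
     = - (real k + 1) * (real k + \<alpha> + 1) * monic_laguerre_coeff \<alpha> n (Suc k)"
proof (cases "k < n")
  case True
  define m where "m = n - Suc k"
  have n: "n = k + Suc m" and nk: "n - k = Suc m" "n - Suc k = m"
    using True by (simp_all add: m_def)
  have poch: "pochhammer (real k + \<alpha> + 1) (Suc m) = (real k + \<alpha> + 1) * pochhammer (real (Suc k) + \<alpha> + 1) m"
    by (simp add: pochhammer_rec algebra_simps)
  show ?thesis
    unfolding monic_laguerre_coeff_def nk poch using True
    by (simp add: n fact_Suc field_simps del: of_nat_Suc) (simp add: algebra_simps)
qed (simp add: monic_laguerre_coeff_def)

lemma monic_laguerre_coeff_recurrence:
  "monic_laguerre_coeff \<alpha> (Suc (Suc n)) i =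
     (if i = 0 then 0 else monic_laguerre_coeff \<alpha> (Suc n) (i - 1))
     - (2 * real (Suc n) + \<alpha> + 1) * monic_laguerre_coeff \<alpha> (Suc n) i
     - real (Suc n) * (real (Suc n) + \<alpha>) * monic_laguerre_coeff \<alpha> n i"
proof (cases i)
  case 0
  then show ?thesis by (simp add: monic_laguerre_coeff_0 pochhammer_rec' algebra_simps)
next
  case (Suc k)
  show ?thesis
  proof (cases "k \<le> n")
    case True
    \<comment> \<open>By the two step lemmas all four coefficients are multiples of \<open>Y\<close>.\<close>
    define Y where "Y = monic_laguerre_coeff \<alpha> (Suc n) (Suc k)"
    define m where "m = real (Suc n - k)"
    have m: "m = real n - real k + 1" "m \<noteq> 0"
      using True by (simp_all add: m_def of_nat_diff)
    have c1: "m * monic_laguerre_coeff \<alpha> (Suc n) k = - (real k + 1) * (real k + \<alpha> + 1) * Y"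
      using monic_laguerre_coeff_index_step[of "Suc n" k \<alpha>] by (simp add: m_def Y_def)
    have c0: "real (Suc n) * (real (Suc n) + \<alpha>) * monic_laguerre_coeff \<alpha> n (Suc k) = - (real n - real k) * Y"
      using monic_laguerre_coeff_degree_step[of n "Suc k" \<alpha>] True by (simp add: Y_def of_nat_diff algebra_simps)
    have "m * (monic_laguerre_coeff \<alpha> (Suc n) k - (2 * real (Suc n) + \<alpha> + 1) * Y
        - real (Suc n) * (real (Suc n) + \<alpha>) * monic_laguerre_coeff \<alpha> n (Suc k))
      = m * monic_laguerre_coeff \<alpha> (Suc n) k
        - m * (2 * real (Suc n) + \<alpha> + 1) * Y
        - m * (real (Suc n) * (real (Suc n) + \<alpha>) * monic_laguerre_coeff \<alpha> n (Suc k))"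
      by (simp add: algebra_simps)
    also have "\<dots> = - (real k + 1) * (real k + \<alpha> + 1) * Y - m * (2 * real (Suc n) + \<alpha> + 1) * Y
        + m * (real n - real k) * Y"
      unfolding c1 c0 by (simp add: algebra_simps)
    also have "\<dots> = - (real n + 2) * (real n + \<alpha> + 2) * Y"
      unfolding m(1) by (simp add: algebra_simps)
    also have "\<dots> = m * monic_laguerre_coeff \<alpha> (Suc (Suc n)) (Suc k)"
      using monic_laguerre_coeff_degree_step[of "Suc n" "Suc k" \<alpha>] by (simp add: m_def Y_def algebra_simps)
    finally show ?thesis
      using m(2) by (simp add: Suc Y_def)
  qed (cases "k = Suc n", simp_all add: Suc monic_laguerre_coeff_above)
qed

lemma monic_laguerre_recurrence:
  "monic_laguerre \<alpha> (Suc (Suc n)) = [:-(2 * real (Suc n) + \<alpha> + 1), 1:] * monic_laguerre \<alpha> (Suc n)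
     - smult (real (Suc n) * (real (Suc n) + \<alpha>)) (monic_laguerre \<alpha> n)"
proof (rule poly_eqI)
  fix i
  have "coeff ([:a, 1:] * p) i = a * coeff p i + (if i = 0 then 0 else coeff p (i - 1))" for a :: real and p
    by (cases i) (auto simp: coeff_pCons)
  then show "coeff (monic_laguerre \<alpha> (Suc (Suc n))) i = coeff ([:-(2 * real (Suc n) + \<alpha> + 1), 1:]
      * monic_laguerre \<alpha> (Suc n) - smult (real (Suc n) * (real (Suc n) + \<alpha>)) (monic_laguerre \<alpha> n)) i"
    by (simp add: coeff_monic_laguerre monic_laguerre_coeff_recurrence algebra_simps)
qed

lemma poly_monic_laguerre_recurrence:
  "poly (monic_laguerre \<alpha> (Suc (Suc n))) x = (x - (2 * real (Suc n) + \<alpha> + 1)) * poly (monic_laguerre \<alpha> (Suc n)) x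
     - real (Suc n) * (real (Suc n) + \<alpha>) * poly (monic_laguerre \<alpha> n) x"
  by (subst monic_laguerre_recurrence) (simp add: algebra_simps)

lemma monic_laguerre_0 [simp]: "monic_laguerre \<alpha> 0 = 1"
  by (rule poly_eqI) (simp add: coeff_monic_laguerre monic_laguerre_coeff_def coeff_1)

lemma monic_laguerre_1: "monic_laguerre \<alpha> (Suc 0) = [:-\<alpha> - 1, 1:]"
  by (rule poly_eqI) (auto simp: coeff_monic_laguerre monic_laguerre_coeff_def coeff_pCons split: nat.split)

lemma poly_monic_laguerre_at_0: "poly (monic_laguerre \<alpha> m) 0 = (-1) ^ m * pochhammer (\<alpha> + 1) m"
  by (simp add: poly_0_coeff_0 coeff_monic_laguerre monic_laguerre_coeff_0)

lemma degree_monic_laguerre [simp]: "degree (monic_laguerre \<alpha> m) = m"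
  by (intro antisym degree_le le_degree) (auto simp: coeff_monic_laguerre monic_laguerre_coeff_above)

lemma coeff_monic_laguerre_top [simp]: "coeff (monic_laguerre \<alpha> m) m = 1"
  by (simp add: coeff_monic_laguerre)

section \<open>Polynomials with prescribed real zeros\<close>

definition poly_of_roots :: "'a::comm_ring_1 list \<Rightarrow> 'a poly" where
  "poly_of_roots xs = (\<Prod>x\<leftarrow>xs. [:-x, 1:])"

lemma poly_of_roots_Nil [simp]: "poly_of_roots [] = 1"
  and poly_of_roots_Cons: "poly_of_roots (x # xs) = [:-x, 1:] * poly_of_roots xs"
  by (simp_all add: poly_of_roots_def)

lemma poly_of_roots_eq_0_iff: "poly (poly_of_roots xs) y = 0 \<longleftrightarrow> y \<in> set xs"
  for xs :: "'a::idom list"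
  by (induction xs) (auto simp: poly_of_roots_Cons)

lemma poly_of_roots_neq_0 [simp]: "poly_of_roots xs \<noteq> (0 :: 'a::idom poly)"
  by (induction xs) (auto simp: poly_of_roots_Cons simp del: mult_pCons_left)

lemma degree_poly_of_roots [simp]: "degree (poly_of_roots xs) = length xs"
  for xs :: "'a::idom list"
  by (induction xs) (simp_all add: poly_of_roots_Cons degree_mult_eq del: mult_pCons_left)

lemma lead_coeff_poly_of_roots [simp]: "lead_coeff (poly_of_roots xs) = 1"
  for xs :: "'a::idom list"
  by (induction xs) (simp_all add: poly_of_roots_Cons lead_coeff_mult del: mult_pCons_left)

lemma proots_poly_of_roots [simp]: "proots (poly_of_roots xs) = mset xs"
  for xs :: "'a::idom list"
  by (induction xs) (simp_all add: poly_of_roots_Cons proots_mult del: mult_pCons_left)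

lemma poly_of_roots_at_0: "poly (poly_of_roots xs) 0 = (-1) ^ length xs * prod_list xs"
  by (induction xs) (simp_all add: poly_of_roots_Cons del: mult_pCons_left)

lemma map_poly_of_real_mult:
  "map_poly of_real (p * q) = map_poly of_real p * map_poly (of_real :: real \<Rightarrow> 'a::{real_algebra_1,comm_semiring_0}) q"
  by (rule poly_eqI) (simp add: coeff_map_poly coeff_mult)

lemma map_poly_of_real_poly_of_roots:
  "map_poly (of_real :: real \<Rightarrow> 'a::{real_algebra_1,comm_ring_1}) (poly_of_roots xs) = poly_of_roots (map of_real xs)"
  by (induction xs) (simp_all add: poly_of_roots_Cons map_poly_of_real_mult map_poly_pCons del: mult_pCons_left)

lemma poly_of_roots_dvd:
  fixes p :: "'a::idom poly"
  assumes "distinct xs" and "\<forall>x\<in>set xs. poly p x = 0"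
  shows "poly_of_roots xs dvd p"
  using assms
proof (induction xs arbitrary: p)
  case (Cons x xs)
  obtain r where r: "p = [:-x, 1:] * r"
    using Cons.prems by (auto simp: poly_eq_0_iff_dvd elim: dvdE)
  have "\<forall>y\<in>set xs. poly r y = 0"
    using Cons.prems by (auto simp: r simp del: mult_pCons_left)
  with Cons.IH Cons.prems have "poly_of_roots xs dvd r" by simp
  then show ?case by (simp add: r poly_of_roots_Cons del: mult_pCons_left)
qed simp

lemma eq_smult_poly_of_roots:
  fixes p :: "'a::idom poly"
  assumes "distinct xs" and "\<forall>x\<in>set xs. poly p x = 0" and "degree p = length xs"
  shows "p = smult (lead_coeff p) (poly_of_roots xs)"
proof (cases "p = 0")
  case False
  obtain r where r: "p = poly_of_roots xs * r"
    using poly_of_roots_dvd[OF assms(1,2)] by (elim dvdE)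
  with False have "r \<noteq> 0" by auto
  with r assms(3) have "degree r = 0" by (simp add: degree_mult_eq)
  then obtain c where "r = [:c:]" by (rule degree_eq_zeroE)
  with r show ?thesis
    using lead_coeff_poly_of_roots[of xs] by (simp add: lead_coeff_mult del: lead_coeff_poly_of_roots)
qed simp

definition interleaves :: "real list \<Rightarrow> real list \<Rightarrow> bool" where
  "interleaves xs ys \<longleftrightarrow> length xs = Suc (length ys) \<and>
     (\<forall>k<length ys. xs ! k < ys ! k \<and> ys ! k < xs ! Suc k)"

lemma interleaves_sorted:
  assumes "interleaves xs ys"
  shows "sorted_wrt (<) xs"
proof -
  have "xs ! k < xs ! Suc k" if "Suc k < length xs" for k
    using assms that unfolding interleaves_def by fastforce
  then show ?thesis by (simp add: sorted_wrt_iff_nth_Suc_transp)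
qed

lemma interleaves_sorted_right:
  assumes "interleaves xs ys"
  shows "sorted_wrt (<) ys"
proof -
  have "ys ! k < ys ! Suc k" if "Suc k < length ys" for k
    using assms that unfolding interleaves_def by (metis Suc_lessD less_trans)
  then show ?thesis by (simp add: sorted_wrt_iff_nth_Suc_transp)
qed

lemma sgn_poly_of_roots_count:
  "y \<notin> set xs \<Longrightarrow> sgn (poly (poly_of_roots xs) y) = (-1) ^ length (filter (\<lambda>x. y < x) xs)"
  for y :: real
  by (induction xs) (auto simp: poly_of_roots_Cons sgn_mult simp del: mult_pCons_left)

lemma sgn_poly_of_roots_interleaved:
  assumes "interleaves xs ys" and "k < length xs"
  shows "sgn (poly (poly_of_roots ys) (xs ! k)) = (-1) ^ (length ys - k)"
proof -
  have sorted: "sorted ys"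
    using interleaves_sorted_right[OF assms(1)] by (simp add: strict_sorted_iff)
  have below: "y < xs ! k" if y: "y \<in> set (take k ys)" for y
  proof -
    obtain i where "i < length (take k ys)" "take k ys ! i = y"
      using y by (auto simp: in_set_conv_nth)
    then have i: "i < k" "i < length ys" "y = ys ! i" by auto
    have "k - 1 < length ys"
      using i assms by (auto simp: interleaves_def)
    then have "ys ! i \<le> ys ! (k - 1)"
      using sorted_nth_mono[OF sorted, of i "k - 1"] i by simp
    also have "\<dots> < xs ! k"
      using assms i by (auto simp: interleaves_def dest: spec[of _ "k - 1"])
    finally show ?thesis using i by simp
  qed
  have above: "xs ! k < y" if y: "y \<in> set (drop k ys)" for y
  proof -
    obtain i where i: "k \<le> i" "i < length ys" "y = ys ! i"
      using y by (auto simp: in_set_conv_nth) (metis add.commute le_add2 less_diff_conv)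
    have "xs ! k < ys ! k"
      using assms(1) i by (auto simp: interleaves_def)
    also have "ys ! k \<le> ys ! i"
      using sorted_nth_mono[OF sorted, of k i] i by simp
    finally show ?thesis using i by simp
  qed
  have "filter (\<lambda>y. xs ! k < y) (take k ys) = []"
    using below by (force simp: filter_empty_conv)
  moreover have "filter (\<lambda>y. xs ! k < y) (drop k ys) = drop k ys"
    using above by (simp add: filter_id_conv)
  ultimately have "filter (\<lambda>y. xs ! k < y) ys = drop k ys"
    by (metis append_Nil append_take_drop_id filter_append)
  moreover have "xs ! k \<notin> set ys"
    using below above by (metis append_take_drop_id Un_iff less_irrefl set_append)
  ultimately show ?thesis by (simp add: sgn_poly_of_roots_count)
qed

text \<open>The sign pattern on \<open>ys\<close> of a polynomial with positive leading coefficient that has one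
  simple zero in each gap of \<open>ys\<close> and one beyond each of its ends.\<close>
definition sign_alternates :: "real poly \<Rightarrow> real list \<Rightarrow> bool" where
  "sign_alternates p ys \<longleftrightarrow> (\<forall>k<length ys. sgn (poly p (ys ! k)) = (-1) ^ (length ys - k))"

lemma sign_alternates_interleaved:
  "interleaves xs ys \<Longrightarrow> sign_alternates (- poly_of_roots ys) xs"
  by (auto simp: sign_alternates_def sgn_poly_of_roots_interleaved interleaves_def Suc_diff_le)

lemma poly_pos_right:
  fixes p :: "real poly"
  assumes "lead_coeff p > 0"
  shows "\<exists>M. \<forall>x\<ge>M. poly p x > 0"
  using poly_pinfty_gt_lc[OF assms] assms by (meson less_le_trans)

lemma sgn_poly_left:
  fixes p :: "real poly"
  assumes "lead_coeff p > 0"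
  shows "\<exists>M. \<forall>x\<le>M. sgn (poly p x) = (-1) ^ degree p"
proof -
  define r where "r = smult ((-1) ^ degree p) (p \<circ>\<^sub>p [:0, -1:])"
  have "lead_coeff (p \<circ>\<^sub>p [:0, -1:]) = lead_coeff p * (-1) ^ degree p"
    by (subst lead_coeff_comp) auto
  then have "lead_coeff r = lead_coeff p"
    by (simp add: r_def degree_pcompose flip: power_mult_distrib)
  then obtain M where M: "\<forall>x\<ge>M. poly r x > 0"
    using poly_pos_right assms by metis
  have "sgn (poly p x) = (-1) ^ degree p" if "x \<le> -M" for x
  proof -
    have "(-1) ^ degree p * poly p x > 0"
      using M[rule_format, of "-x"] that by (simp add: r_def poly_pcompose)
    then show ?thesis
      by (cases "even (degree p)") (auto simp: sgn_if zero_less_mult_iff)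
  qed
  then show ?thesis by blast
qed

lemma sign_alternates_mult_neg:
  assumes "sign_alternates p bs" and "Suc k < length bs"
  shows "poly p (bs ! k) * poly p (bs ! Suc k) < 0"
proof -
  have "length bs - k = Suc (length bs - Suc k)"
    using assms(2) by simp
  then have "sgn (poly p (bs ! k) * poly p (bs ! Suc k)) = -1"
    using assms by (simp add: sign_alternates_def sgn_mult)
  then show ?thesis
    by (simp only: sgn_1_neg)
qed

lemma roots_between_sign_changes:
  fixes p :: "real poly"
  assumes "sorted_wrt (<) bs" and "sign_alternates p bs"
  shows "\<exists>xs. length xs = length bs - 1 \<and>
           (\<forall>k<length xs. bs ! k < xs ! k \<and> xs ! k < bs ! Suc k \<and> poly p (xs ! k) = 0)"
proof -
  have "\<forall>k\<in>{..<length bs - 1}. \<exists>x. bs ! k < x \<and> x < bs ! Suc k \<and> poly p x = 0"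
    using sorted_wrt_nth_less[OF assms(1)] sign_alternates_mult_neg[OF assms(2)] poly_IVT by auto
  then obtain f where f: "\<forall>k\<in>{..<length bs - 1}. bs ! k < f k \<and> f k < bs ! Suc k \<and> poly p (f k) = 0"
    by (metis bchoice)
  show ?thesis
    by (rule exI[of _ "map f [0..<length bs - 1]"]) (use f in auto)
qed

lemma sign_alternates_extend:
  fixes p :: "real poly"
  assumes ys: "sorted_wrt (<) ys" and deg: "degree p = Suc (length ys)" and lc: "lead_coeff p > 0"
    and alt: "sign_alternates p ys"
  shows "\<exists>L U. sorted_wrt (<) (L # ys @ [U]) \<and> sign_alternates (- p) (L # ys @ [U])"
proof -
  define m where "m = length ys"
  obtain M1 where M1: "\<forall>x\<ge>M1. poly p x > 0"
    using poly_pos_right[OF lc] by blast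
  obtain M2 where M2: "\<forall>x\<le>M2. sgn (poly p x) = (-1) ^ Suc m"
    using sgn_poly_left[OF lc] deg by (auto simp: m_def)
  define U where "U = Max (insert M1 (set ys)) + 1"
  define L where "L = Min (insert M2 (insert U (set ys))) - 1"
  have "M1 \<le> U - 1" "\<forall>y\<in>set ys. y \<le> U - 1"
    by (simp_all add: U_def)
  then have U: "M1 < U" "\<forall>y\<in>set ys. y < U"
    by auto
  have "L + 1 \<le> M2" "L + 1 \<le> U" "\<forall>y\<in>set ys. L + 1 \<le> y"
    by (auto simp: L_def intro: min.coboundedI2 Min_le)
  then have L: "L < M2" "L < U" "\<forall>y\<in>set ys. L < y"
    by auto
  have "sgn (poly p ((L # ys @ [U]) ! k)) = (-1) ^ (Suc m - k)" if "k < Suc (Suc m)" for k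
  proof (cases k)
    case 0
    then show ?thesis using M2 L by simp
  next
    case (Suc j)
    show ?thesis
    proof (cases "j < m")
      case True
      with Suc alt show ?thesis
        by (simp add: nth_append sign_alternates_def m_def)
    next
      case False
      with Suc that have "k = Suc m" "(L # ys @ [U]) ! k = U"
        by (simp_all add: nth_append m_def)
      with M1 U show ?thesis by simp
    qed
  qed
  then have "sign_alternates (- p) (L # ys @ [U])"
    by (auto simp: sign_alternates_def m_def Suc_diff_le sgn_minus)
  moreover have "sorted_wrt (<) (L # ys @ [U])"
    using ys U L by (auto simp: sorted_wrt_append)
  ultimately show ?thesis by blast
qed

lemma real_roots_interleaving:
  fixes p :: "real poly"
  assumes ys: "sorted_wrt (<) ys" and deg: "degree p = Suc (length ys)" and lc: "lead_coeff p > 0"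
    and alt: "sign_alternates p ys"
  shows "\<exists>xs. interleaves xs ys \<and> p = smult (lead_coeff p) (poly_of_roots xs)"
proof -
  obtain L U where bs: "sorted_wrt (<) (L # ys @ [U])" "sign_alternates (- p) (L # ys @ [U])"
    using sign_alternates_extend[OF assms] by blast
  then obtain xs where xs: "length xs = Suc (length ys)"
      "\<forall>k<length xs. (L # ys @ [U]) ! k < xs ! k \<and> xs ! k < (L # ys @ [U]) ! Suc k \<and> poly p (xs ! k) = 0"
    using roots_between_sign_changes[OF bs] by auto
  have "interleaves xs ys"
    unfolding interleaves_def
  proof (intro conjI allI impI)
    fix k assume k: "k < length ys"
    then have "(L # ys @ [U]) ! Suc k = ys ! k"
      by (simp add: nth_append)
    with k show "xs ! k < ys ! k" "ys ! k < xs ! Suc k"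
      using xs(2)[rule_format, of k] xs(2)[rule_format, of "Suc k"] xs(1) by simp_all
  qed (fact xs(1))
  moreover have "p = smult (lead_coeff p) (poly_of_roots xs)"
  proof (rule eq_smult_poly_of_roots)
    show "distinct xs"
      using interleaves_sorted[OF \<open>interleaves xs ys\<close>] by (simp add: strict_sorted_iff)
    show "\<forall>x\<in>set xs. poly p x = 0"
      using xs(2) by (auto simp: in_set_conv_nth)
  qed (simp add: deg xs(1))
  ultimately show ?thesis by blast
qed

section \<open>Zeros and growth of the monic Laguerre polynomials\<close>

lemma monic_laguerre_real_roots:
  assumes "\<alpha> > -1"
  shows "\<exists>ys. length ys = m \<and> sorted_wrt (<) ys \<and> monic_laguerre \<alpha> m = poly_of_roots ys \<and>
           sign_alternates (- monic_laguerre \<alpha> (m - 1)) ys"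
proof (induction m)
  case (Suc m)
  show ?case
  proof (cases m)
    case 0
    then show ?thesis
      by (intro exI[of _ "[\<alpha> + 1]"]) (simp add: monic_laguerre_1 sign_alternates_def poly_of_roots_Cons)
  next
    case (Suc n)
    obtain ys where ys: "length ys = m" "sorted_wrt (<) ys" "monic_laguerre \<alpha> m = poly_of_roots ys"
        "sign_alternates (- monic_laguerre \<alpha> (m - 1)) ys"
      using Suc.IH by blast
    have "sign_alternates (monic_laguerre \<alpha> (Suc m)) ys"
      unfolding sign_alternates_def
    proof (intro allI impI)
      fix k assume k: "k < length ys"
      have "poly (monic_laguerre \<alpha> m) (ys ! k) = 0"
        using ys(3) k by (simp add: poly_of_roots_eq_0_iff)
      then have "poly (monic_laguerre \<alpha> (Suc m)) (ys ! k)
          = (real m * (real m + \<alpha>)) * poly (- monic_laguerre \<alpha> (m - 1)) (ys ! k)"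
        by (simp add: Suc poly_monic_laguerre_recurrence)
      moreover have "real m > 0" "real m + \<alpha> > 0"
        using assms Suc by simp_all
      ultimately show "sgn (poly (monic_laguerre \<alpha> (Suc m)) (ys ! k)) = (-1) ^ (length ys - k)"
        using ys(4) k by (simp add: sgn_mult sign_alternates_def)
    qed
    then obtain xs where xs: "interleaves xs ys" "monic_laguerre \<alpha> (Suc m) = poly_of_roots xs"
      using real_roots_interleaving[OF ys(2), of "monic_laguerre \<alpha> (Suc m)"] ys(1) by auto
    then show ?thesis
      using ys xs interleaves_sorted sign_alternates_interleaved
      by (intro exI[of _ xs]) (auto simp: interleaves_def)
  qed
qed (simp add: sign_alternates_def)

lemma monic_laguerre_nonpos_growth:
  assumes "\<alpha> > -1" and "x \<le> 0"
  shows "(-1) ^ Suc m * poly (monic_laguerre \<alpha> (Suc m)) x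
      \<ge> (real (Suc m) + \<alpha>) * ((-1) ^ m * poly (monic_laguerre \<alpha> m) x)
    \<and> (-1) ^ m * poly (monic_laguerre \<alpha> m) x > 0"
proof (induction m)
  case 0
  then show ?case using assms(2) by (simp add: monic_laguerre_1)
next
  case (Suc m)
  define s0 where "s0 = (-1) ^ m * poly (monic_laguerre \<alpha> m) x"
  define s1 where "s1 = (-1) ^ Suc m * poly (monic_laguerre \<alpha> (Suc m)) x"
  define s2 where "s2 = (-1) ^ Suc (Suc m) * poly (monic_laguerre \<alpha> (Suc (Suc m))) x"
  have IH: "s1 \<ge> (real (Suc m) + \<alpha>) * s0" "s0 > 0"
    using Suc unfolding s0_def s1_def by auto
  have "real (Suc m) + \<alpha> > 0"
    using assms(1) by simp
  with IH have s1: "s1 > 0"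
    by (meson less_le_trans mult_pos_pos)
  have "s2 = ((2 * real (Suc m) + \<alpha> + 1) - x) * s1 - (real (Suc m) * (real (Suc m) + \<alpha>)) * s0"
    unfolding s0_def s1_def s2_def poly_monic_laguerre_recurrence by (simp add: algebra_simps)
  moreover have "(real (Suc m) * (real (Suc m) + \<alpha>)) * s0 \<le> real (Suc m) * s1"
    using mult_left_mono[OF IH(1), of "real (Suc m)"] by (simp add: algebra_simps)
  moreover have "- x * s1 \<ge> 0"
    using assms(2) s1 by (simp add: mult_nonpos_nonneg)
  ultimately have "s2 \<ge> (real (Suc (Suc m)) + \<alpha>) * s1"
    by (simp add: algebra_simps)
  then show ?case
    using s1 unfolding s1_def s2_def by simp
qed

lemma monic_laguerre_sign_nonpos:
  "\<alpha> > -1 \<Longrightarrow> x \<le> 0 \<Longrightarrow> (-1) ^ m * poly (monic_laguerre \<alpha> m) x > 0"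
  using monic_laguerre_nonpos_growth by blast

lemma monic_laguerre_large_growth:
  assumes "\<alpha> > -1" and "x \<ge> \<alpha> + 2" and "x \<ge> 4 * real m + 2 * \<alpha> + 2"
  shows "poly (monic_laguerre \<alpha> (Suc m)) x \<ge> real (Suc m) * poly (monic_laguerre \<alpha> m) x
    \<and> poly (monic_laguerre \<alpha> m) x > 0"
  using assms(3)
proof (induction m)
  case 0
  then show ?case using assms(2) by (simp add: monic_laguerre_1)
next
  case (Suc m)
  define t0 where "t0 = poly (monic_laguerre \<alpha> m) x"
  define t1 where "t1 = poly (monic_laguerre \<alpha> (Suc m)) x"
  define t2 where "t2 = poly (monic_laguerre \<alpha> (Suc (Suc m))) x"
  have IH: "t1 \<ge> real (Suc m) * t0" "t0 > 0"
    using Suc unfolding t0_def t1_def by auto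
  then have t1: "t1 > 0"
    by (smt (verit) of_nat_0_less_iff mult_pos_pos zero_less_Suc)
  have "t2 = (x - (2 * real (Suc m) + \<alpha> + 1)) * t1 - (real (Suc m) * (real (Suc m) + \<alpha>)) * t0"
    unfolding t0_def t1_def t2_def poly_monic_laguerre_recurrence by simp
  moreover have "(real (Suc m) * (real (Suc m) + \<alpha>)) * t0 \<le> (real (Suc m) + \<alpha>) * t1"
    using mult_left_mono[OF IH(1), of "real (Suc m) + \<alpha>"] assms(1) by (simp add: algebra_simps)
  moreover have "(x - (2 * real (Suc m) + \<alpha> + 1) - (real (Suc m) + \<alpha>)) * t1 \<ge> real (Suc (Suc m)) * t1"
    using Suc.prems t1 by (intro mult_right_mono) auto
  ultimately have "t2 \<ge> real (Suc (Suc m)) * t1"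
    by (simp add: algebra_simps)
  then show ?case
    using t1 unfolding t1_def t2_def by simp
qed

lemma monic_laguerre_root_bounds:
  assumes "\<alpha> > -1" and "poly (monic_laguerre \<alpha> (Suc N)) y = 0"
  shows "0 < y" and "y < max (\<alpha> + 2) (4 * real N + 2 * \<alpha> + 2)"
proof -
  show "0 < y"
    using monic_laguerre_sign_nonpos[OF assms(1), of y "Suc N"] assms(2) by force
  show "y < max (\<alpha> + 2) (4 * real N + 2 * \<alpha> + 2)"
    using monic_laguerre_large_growth[OF assms(1), of y N] assms(2)
    by (smt (verit) of_nat_0_less_iff mult_pos_pos zero_less_Suc)
qed

lemma monic_laguerre_backward_step:
  fixes \<alpha> y B :: real
  assumes cond: "\<bar>y - (2 * real (Suc m) + \<alpha> + 1)\<bar> + 1 \<le> 2 * (real (Suc m) * (real (Suc m) + \<alpha>))"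
    and B1: "\<bar>poly (monic_laguerre \<alpha> (Suc m)) y\<bar> \<le> B"
    and B2: "\<bar>poly (monic_laguerre \<alpha> (Suc (Suc m))) y\<bar> \<le> B"
  shows "\<bar>poly (monic_laguerre \<alpha> m) y\<bar> \<le> 2 * B"
proof -
  define P where "P k = poly (monic_laguerre \<alpha> k) y" for k
  define b where "b = 2 * real (Suc m) + \<alpha> + 1"
  define c where "c = real (Suc m) * (real (Suc m) + \<alpha>)"
  have "c > 0"
    using cond by (simp add: c_def)
  have "c * P m = (y - b) * P (Suc m) - P (Suc (Suc m))"
    unfolding P_def poly_monic_laguerre_recurrence b_def c_def by simp
  with \<open>c > 0\<close> have "c * \<bar>P m\<bar> = \<bar>(y - b) * P (Suc m) - P (Suc (Suc m))\<bar>"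
    by (metis abs_mult abs_of_pos)
  also have "\<dots> \<le> \<bar>y - b\<bar> * \<bar>P (Suc m)\<bar> + \<bar>P (Suc (Suc m))\<bar>"
    by (metis abs_mult abs_triangle_ineq4)
  also have "\<dots> \<le> \<bar>y - b\<bar> * B + B"
    using B1 B2 by (intro add_mono mult_left_mono) (auto simp: P_def)
  also have "\<dots> = (\<bar>y - b\<bar> + 1) * B"
    by (simp add: algebra_simps)
  also have "\<dots> \<le> (2 * c) * B"
    using cond B1 by (intro mult_right_mono) (auto simp: b_def c_def)
  finally show ?thesis
    using \<open>c > 0\<close> by (simp add: P_def)
qed

lemma monic_laguerre_backward_bound:
  fixes \<alpha> y :: real
  assumes root: "poly (monic_laguerre \<alpha> (Suc N)) y = 0" and "J \<le> N"
    and cond: "\<And>m. N - J < m \<Longrightarrow> m \<le> N \<Longrightarrow>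
      \<bar>y - (2 * real m + \<alpha> + 1)\<bar> + 1 \<le> 2 * (real m * (real m + \<alpha>))"
    and "i \<le> J"
  shows "\<bar>poly (monic_laguerre \<alpha> (N - i)) y\<bar> \<le> 2 ^ i * \<bar>poly (monic_laguerre \<alpha> N) y\<bar>
    \<and> \<bar>poly (monic_laguerre \<alpha> (Suc N - i)) y\<bar> \<le> 2 ^ i * \<bar>poly (monic_laguerre \<alpha> N) y\<bar>"
  using assms(4)
proof (induction i)
  case 0
  then show ?case using root by simp
next
  case (Suc i)
  define A where "A = \<bar>poly (monic_laguerre \<alpha> N) y\<bar>"
  define m where "m = N - Suc i"
  have idx: "N - i = Suc m" "Suc N - Suc i = Suc m" "N - Suc i = m" "Suc N - i = Suc (Suc m)"
    using Suc.prems assms(2) unfolding m_def by auto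
  have IH: "\<bar>poly (monic_laguerre \<alpha> (Suc m)) y\<bar> \<le> 2 ^ i * A"
      "\<bar>poly (monic_laguerre \<alpha> (Suc (Suc m))) y\<bar> \<le> 2 ^ i * A"
    using Suc.IH Suc.prems idx unfolding A_def by auto
  have "N - J < Suc m" "Suc m \<le> N"
    using Suc.prems assms(2) by (auto simp: m_def)
  then have "\<bar>poly (monic_laguerre \<alpha> m) y\<bar> \<le> 2 ^ Suc i * A"
    using monic_laguerre_backward_step[OF cond IH] by (simp add: mult.assoc)
  moreover have "\<bar>poly (monic_laguerre \<alpha> (Suc m)) y\<bar> \<le> 2 ^ Suc i * A"
    using IH(1) by (simp add: A_def)
  ultimately show ?case
    using idx unfolding A_def by simp
qed

section \<open>Zero sets, interlacing and complex zeros\<close>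

lemma sorted_adjacent_elements:
  fixes xs :: "real list"
  assumes "sorted_wrt (<) xs" and "a \<in> set xs" and "b \<in> set xs" and "a < b"
    and "\<not> (\<exists>c\<in>set xs. a < c \<and> c < b)"
  shows "\<exists>i. Suc i < length xs \<and> a = xs ! i \<and> b = xs ! Suc i"
proof -
  obtain i j where ij: "i < length xs" "a = xs ! i" "j < length xs" "b = xs ! j"
    using assms(2,3) by (auto simp: in_set_conv_nth)
  have "i < j"
  proof (rule ccontr)
    assume "\<not> i < j"
    then have "xs ! j \<le> xs ! i"
      using sorted_wrt_nth_less[OF assms(1), of j i] ij by (cases "i = j") auto
    with ij assms(4) show False by simp
  qed
  moreover have "\<not> Suc i < j"
  proof
    assume "Suc i < j"
    then have "a < xs ! Suc i" "xs ! Suc i < b" "xs ! Suc i \<in> set xs"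
      using sorted_wrt_nth_less[OF assms(1)] ij by auto
    with assms(5) show False by blast
  qed
  ultimately have "j = Suc i" by simp
  with ij show ?thesis by blast
qed

lemma interlaces_interleaves:
  assumes "interleaves xs ys" and "ys \<noteq> []"
  shows "interlaces (set xs) (set ys)"
proof -
  have sx: "sorted_wrt (<) xs" and sy: "sorted_wrt (<) ys"
    using assms(1) by (simp_all add: interleaves_sorted interleaves_sorted_right)
  have il: "length xs = Suc (length ys)" "\<And>k. k < length ys \<Longrightarrow> xs ! k < ys ! k \<and> ys ! k < xs ! Suc k"
    using assms(1) by (simp_all add: interleaves_def)
  have min: "Min (set zs) = zs ! 0" if "sorted_wrt (<) zs" "zs \<noteq> []" for zs :: "real list"
    using that by (cases zs) (auto intro!: Min_eqI simp: less_imp_le)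
  show ?thesis
    unfolding interlaces_def
  proof (intro conjI ballI impI)
    have "xs \<noteq> []"
      using il(1) by auto
    then show "Min (set xs) < Min (set ys)"
      using min[OF sx] min[OF sy] il assms(2) by auto
    show "\<exists>v\<in>set ys. a < v \<and> v < b"
      if adj: "a \<in> set xs" "b \<in> set xs" "a < b \<and> \<not> (\<exists>c\<in>set xs. a < c \<and> c < b)" for a b
    proof -
      obtain i where "Suc i < length xs" "a = xs ! i" "b = xs ! Suc i"
        using sorted_adjacent_elements[OF sx] adj by blast
      with il show ?thesis by (intro bexI[of _ "ys ! i"]) auto
    qed
    show "\<exists>u\<in>set xs. a < u \<and> u < b"
      if adj: "a \<in> set ys" "b \<in> set ys" "a < b \<and> \<not> (\<exists>c\<in>set ys. a < c \<and> c < b)" for a b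
    proof -
      obtain i where "Suc i < length ys" "a = ys ! i" "b = ys ! Suc i"
        using sorted_adjacent_elements[OF sy] adj by blast
      with il show ?thesis by (intro bexI[of _ "xs ! Suc i"]) auto
    qed
  qed (use assms il in auto)
qed

lemma zeros_smult_poly_of_roots:
  fixes c :: real
  assumes "c \<noteq> 0"
  shows "{x. poly (smult c (poly_of_roots xs)) x = 0} = set xs"
  using assms by (auto simp: poly_of_roots_eq_0_iff)

lemma zeros_laguerre: "{x. poly (laguerre \<alpha> m) x = 0} = {x. poly (monic_laguerre \<alpha> m) x = 0}"
  by (simp add: monic_laguerre_def)

lemma complex_zeros_smult_poly_of_roots:
  fixes c :: real
  assumes "c \<noteq> 0"
  shows "poly (map_poly complex_of_real (smult c (poly_of_roots xs))) z = 0 \<longleftrightarrow> z \<in> complex_of_real ` set xs"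
  using assms by (simp add: map_poly_smult map_poly_of_real_poly_of_roots poly_of_roots_eq_0_iff)

lemma order_smult_poly_of_roots:
  fixes c :: real
  assumes "c \<noteq> 0" and "distinct xs" and "z \<in> complex_of_real ` set xs"
  shows "order z (map_poly complex_of_real (smult c (poly_of_roots xs))) = 1"
proof -
  have "order z (map_poly complex_of_real (smult c (poly_of_roots xs)))
      = count (mset (map complex_of_real xs)) z"
    using assms(1) by (simp add: map_poly_smult map_poly_of_real_poly_of_roots order_smult
        flip: count_proots)
  also have "\<dots> = 1"
  proof -
    have "distinct (map complex_of_real xs)"
      using assms(2) by (simp add: distinct_map inj_on_def)
    then have "\<forall>a. count (mset (map complex_of_real xs)) a = (if a \<in> set (map complex_of_real xs) then 1 else 0)"
      by (metis distinct_count_atmost_1)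
    with assms(3) show ?thesis by simp
  qed
  finally show ?thesis .
qed

lemma interleaved_roots_pos:
  assumes "interleaves xs ys" and "\<forall>y\<in>set ys. y > 0"
    and "(-1) ^ length xs * poly (poly_of_roots xs) 0 > 0"
  shows "\<forall>x\<in>set xs. x > 0"
proof -
  obtain x xs' where xs: "xs = x # xs'"
    using assms(1) by (cases xs) (auto simp: interleaves_def)
  have "\<forall>x'\<in>set xs'. x' > 0"
  proof
    fix x' assume "x' \<in> set xs'"
    then obtain k where k: "k < length xs'" "x' = xs ! Suc k"
      by (auto simp: xs in_set_conv_nth)
    then have "ys ! k < x'" "ys ! k \<in> set ys"
      using assms(1) by (auto simp: interleaves_def xs)
    with assms(2) show "x' > 0" by force
  qed
  then have "prod_list xs' > 0"
    by (induction xs') auto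
  moreover have "prod_list xs > 0"
    using assms(3) by (simp add: poly_of_roots_at_0 flip: mult.assoc power_add)
  ultimately have "x > 0"
    by (simp add: xs zero_less_mult_iff)
  with \<open>\<forall>x'\<in>set xs'. x' > 0\<close> show ?thesis
    by (simp add: xs)
qed

lemma geom_quot_eq_sum: "geom_quot t K = (\<Sum>i<K - 1. t ^ i)"
  unfolding geom_quot_def by (simp add: geometric_sum)

lemma leading_term_dominates:
  fixes \<alpha> \<nu> n :: real
  assumes "\<alpha> > -1" and "\<nu> \<le> 2 * n + \<alpha> - 1" and "n \<ge> \<alpha> + 9" and "n \<ge> 9"
  shows "\<nu> * (8 * n + 2 * \<bar>\<alpha>\<bar>) / 46 < (n - 1) * (n - 1 + \<alpha>)"
proof -
  have "\<nu> * (8 * n + 2 * \<bar>\<alpha>\<bar>) \<le> (2 * n + \<alpha> - 1) * (8 * n + 2 * \<bar>\<alpha>\<bar>)"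
    using assms(2,4) by (intro mult_right_mono) auto
  also have "\<dots> < 46 * ((n - 1) * (n - 1 + \<alpha>))"
  proof -
    have sq: "9 * n \<le> n * n"
      using assms(4) by (intro mult_right_mono) auto
    have rhs: "46 * ((n - 1) * (n - 1 + \<alpha>)) = 46 * (n * n) - 92 * n + 46 + 46 * (\<alpha> * n) - 46 * \<alpha>"
      by (simp add: algebra_simps)
    show ?thesis
    proof (cases "\<alpha> \<ge> 0")
      case True
      have "(2 * n + \<alpha> - 1) * (8 * n + 2 * \<bar>\<alpha>\<bar>)
        = 16 * (n * n) + 12 * (\<alpha> * n) + 2 * (\<alpha> * \<alpha>) - 8 * n - 2 * \<alpha>"
        using True by (simp add: algebra_simps)
      moreover have "\<alpha> * \<alpha> \<le> \<alpha> * n" "9 * \<alpha> \<le> \<alpha> * n"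
        using True assms(3,4) by (auto intro: mult_left_mono simp: mult.commute)
      ultimately show ?thesis
        unfolding rhs using sq True assms(4) by linarith
    next
      case False
      have "(2 * n + \<alpha> - 1) * (8 * n + 2 * \<bar>\<alpha>\<bar>)
        = 16 * (n * n) + 4 * (\<alpha> * n) - 2 * (\<alpha> * \<alpha>) - 8 * n + 2 * \<alpha>"
        using False by (simp add: algebra_simps)
      moreover have "\<alpha> * n \<ge> - n" "\<alpha> * \<alpha> \<ge> 0"
        using assms(1,4) mult_right_mono[of "-1" \<alpha> n] by auto
      ultimately show ?thesis
        unfolding rhs using sq False assms(1,4) by linarith
    qed
  qed
  finally show ?thesis by simp
qed

lemma recurrence_doubling_condition:
  fixes \<alpha> m n y b :: real
  assumes "\<alpha> > -1" and "n \<ge> 9" and "2 * m \<ge> n + 2"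
    and "0 < y" "y < 4 * n + 2 * \<alpha> - 6" and "0 < b" "b \<le> 4 * n + 2 * \<alpha> - 6"
  shows "\<bar>y - b\<bar> + 1 \<le> 2 * (m * (m + \<alpha>))"
proof -
  have "2 * (m * (m + \<alpha>)) \<ge> (n + 2) * (m + \<alpha>)"
    using assms(1-3) by (simp add: mult.assoc[symmetric] mult_right_mono)
  moreover have "(n + 2) * (m + \<alpha>) \<ge> (n + 2) * ((n + 2) / 2 + \<alpha>)"
    using assms(2,3) by (intro mult_left_mono) auto
  moreover have "(n + 2) * ((n + 2) / 2 + \<alpha>) = (n * n) / 2 + 2 * n + 2 + \<alpha> * n + 2 * \<alpha>"
    by (simp add: algebra_simps)
  moreover have "\<alpha> * n \<ge> - n" "9 * n \<le> n * n"
    using assms(1,2) mult_right_mono[of "-1" \<alpha> n] mult_right_mono[of 9 n n] by auto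
  moreover have "\<bar>y - b\<bar> < 4 * n + 2 * \<alpha> - 6"
    using assms(4-) by auto
  ultimately show ?thesis
    using assms(1,2) by linarith
qed

lemma pochhammer_shift_ge:
  fixes \<alpha> M :: real
  assumes "\<alpha> > -1" and "0 \<le> M" and "M \<le> real m + \<alpha> + 1"
  shows "M ^ j * pochhammer (\<alpha> + 1) m \<le> pochhammer (\<alpha> + 1) (m + j)"
proof (induction j)
  case (Suc j)
  have "M ^ Suc j * pochhammer (\<alpha> + 1) m = M * (M ^ j * pochhammer (\<alpha> + 1) m)"
    by simp
  also have "\<dots> \<le> (\<alpha> + 1 + real (m + j)) * pochhammer (\<alpha> + 1) (m + j)"
    using Suc assms pochhammer_nonneg[of "\<alpha> + 1" m] by (intro mult_mono) auto
  also have "\<dots> = pochhammer (\<alpha> + 1) (m + Suc j)"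
    by (simp add: pochhammer_Suc)
  finally show ?case .
qed simp

lemma sgn_add_dominated: "\<bar>e\<bar> < \<bar>a\<bar> \<Longrightarrow> sgn (a + e) = sgn (a::real)"
  by (auto simp: sgn_if)

lemma sum_atMost_split_first_two:
  fixes f :: "nat \<Rightarrow> 'a::comm_monoid_add"
  assumes "K > 0"
  shows "(\<Sum>j\<le>K. f j) = f 0 + f 1 + (\<Sum>i<K - 1. f (i + 2))"
proof -
  obtain K' where K': "K = Suc K'"
    using assms by (cases K) auto
  have "(\<Sum>j\<le>K. f j) = f 0 + (\<Sum>j<K. f (Suc j))"
    by (rule sum.atMost_shift)
  also have "(\<Sum>j<K. f (Suc j)) = f 1 + (\<Sum>i<K'. f (Suc (Suc i)))"
    unfolding K' by (subst sum.lessThan_Suc_shift) simp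
  finally show ?thesis
    using K' by (simp add: add.assoc)
qed

section \<open>Combinations of consecutive Laguerre polynomials\<close>

locale laguerre_combination =
  fixes \<alpha> \<nu> :: real and \<rho> \<gamma> :: "nat \<Rightarrow> real" and K :: nat and q :: "nat \<Rightarrow> real poly"
  assumes alpha_gt: "\<alpha> > -1"
    and rho_pos: "\<And>n. \<rho> n > 0"
    and nu_pos: "\<nu> > 0"
    and rho_le: "\<And>n. \<rho> n \<le> \<nu> * \<rho> (Suc n)"
    and K_pos: "K > 0"
    and gamma_0: "\<gamma> 0 = 1"
    and q_eq: "\<And>n. q n = (\<Sum>j\<le>K. smult (\<gamma> j * \<rho> (n - j)) (monic_laguerre \<alpha> (n - j)))"
begin

text \<open>For \<open>K = 1\<close> the set is empty and \<open>Max\<close> is unspecified; it then only occurs multiplied by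
  \<open>geom_quot _ 1 = 0\<close>.\<close>
definition tail_coeff_max :: real where
  "tail_coeff_max = Max {\<bar>\<gamma> j\<bar> | j. 2 \<le> j \<and> j \<le> K}"

definition large_degree :: "nat \<Rightarrow> bool" where
  "large_degree n \<longleftrightarrow>
     real n \<ge> (23 * \<nu> * 2 ^ (K - 1) * geom_quot (23 * \<nu>) K * tail_coeff_max - 2 * \<bar>\<alpha>\<bar>) / 8 \<and>
     real n \<ge> (\<nu> - \<alpha> + 1) / 2 \<and> real n \<ge> \<alpha> + 9 \<and> n \<ge> 2 * K"

lemma large_degree_ge_9: "large_degree n \<Longrightarrow> n \<ge> 9"
  using alpha_gt by (simp add: large_degree_def)

lemma rho_diff_le: "j \<le> n \<Longrightarrow> \<rho> (n - j) \<le> \<nu> ^ j * \<rho> n"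
proof (induction j)
  case (Suc j)
  have "\<rho> (n - Suc j) \<le> \<nu> * \<rho> (n - j)"
    using rho_le[of "n - Suc j"] Suc.prems by (simp add: Suc_diff_Suc)
  also have "\<dots> \<le> \<nu> * (\<nu> ^ j * \<rho> n)"
    using Suc nu_pos by (intro mult_left_mono) auto
  finally show ?case by simp
qed simp

lemma coeff_q_high:
  assumes "K \<le> n" and "n \<le> i"
  shows "coeff (q n) i = \<rho> n * coeff (monic_laguerre \<alpha> n) i"
proof -
  have "coeff (q n) i = (\<Sum>j\<le>K. \<gamma> j * \<rho> (n - j) * coeff (monic_laguerre \<alpha> (n - j)) i)"
    by (simp add: q_eq coeff_sum)
  also have "\<dots> = \<gamma> 0 * \<rho> n * coeff (monic_laguerre \<alpha> n) i
      + (\<Sum>j<K. \<gamma> (Suc j) * \<rho> (n - Suc j) * coeff (monic_laguerre \<alpha> (n - Suc j)) i)"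
    by (subst sum.atMost_shift) simp
  also have "(\<Sum>j<K. \<gamma> (Suc j) * \<rho> (n - Suc j) * coeff (monic_laguerre \<alpha> (n - Suc j)) i) = 0"
    using assms K_pos by (intro sum.neutral) (auto simp: coeff_monic_laguerre monic_laguerre_coeff_above)
  finally show ?thesis
    by (simp add: gamma_0)
qed

lemma degree_q: "K \<le> n \<Longrightarrow> degree (q n) = n"
  using rho_pos[of n]
  by (intro antisym degree_le le_degree)
     (auto simp: coeff_q_high coeff_monic_laguerre monic_laguerre_coeff_above)

lemma lead_coeff_q: "K \<le> n \<Longrightarrow> lead_coeff (q n) = \<rho> n"
  by (simp add: degree_q coeff_q_high)

lemma abs_gamma_le_tail_coeff_max: "i < K - 1 \<Longrightarrow> \<bar>\<gamma> (i + 2)\<bar> \<le> tail_coeff_max"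
  unfolding tail_coeff_max_def
  by (rule Max_ge[OF finite_subset[of _ "(\<lambda>j. \<bar>\<gamma> j\<bar>) ` {2..K}"]]) auto

lemma tail_term_le:
  assumes "i < K - 1"
  shows "\<bar>\<gamma> (i + 2)\<bar> * \<nu> ^ (i + 2) * 2 ^ i \<le> \<nu> * tail_coeff_max * 2 ^ (K - 1) * (23 * \<nu>) ^ (i + 1) / 46"
proof -
  define G where "G = tail_coeff_max"
  have "\<bar>\<gamma> (i + 2)\<bar> \<le> G"
    using abs_gamma_le_tail_coeff_max[OF assms] by (simp add: G_def)
  then have "G \<ge> 0"
    by (meson abs_ge_zero order_trans)
  have "46 * 2 ^ i = (23::real) * 2 ^ (i + 1)"
    by simp
  also have "\<dots> \<le> 23 ^ (i + 1) * 2 ^ (K - 1)"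
    using assms by (intro mult_mono power_increasing) (auto simp: self_le_power)
  finally have *: "46 * 2 ^ i \<le> (23::real) ^ (i + 1) * 2 ^ (K - 1)" .
  have "\<bar>\<gamma> (i + 2)\<bar> * \<nu> ^ (i + 2) * 2 ^ i \<le> G * \<nu> * \<nu> ^ (i + 1) * (46 * 2 ^ i) / 46"
    using \<open>\<bar>\<gamma> (i + 2)\<bar> \<le> G\<close> nu_pos by (simp add: mult_right_mono power_add)
  also have "\<dots> \<le> G * \<nu> * \<nu> ^ (i + 1) * (23 ^ (i + 1) * 2 ^ (K - 1)) / 46"
    using * \<open>G \<ge> 0\<close> nu_pos by (intro divide_right_mono mult_left_mono) auto
  also have "\<dots> = \<nu> * G * 2 ^ (K - 1) * (23 * \<nu>) ^ (i + 1) / 46"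
    by (simp add: power_mult_distrib)
  finally show ?thesis
    by (simp add: G_def)
qed

lemma tail_sum_bound:
  assumes "large_degree n"
  shows "(\<Sum>i<K - 1. \<bar>\<gamma> (i + 2)\<bar> * \<nu> ^ (i + 2) * 2 ^ i) \<le> \<nu> * (8 * real n + 2 * \<bar>\<alpha>\<bar>) / 46"
proof -
  define G where "G = tail_coeff_max"
  define t where "t = 23 * \<nu>"
  have "(\<Sum>i<K - 1. \<bar>\<gamma> (i + 2)\<bar> * \<nu> ^ (i + 2) * 2 ^ i)
      \<le> (\<Sum>i<K - 1. \<nu> * G * 2 ^ (K - 1) * t ^ (i + 1) / 46)"
    using tail_term_le by (intro sum_mono) (auto simp: G_def t_def)
  also have "\<dots> = (\<nu> * G * 2 ^ (K - 1) * t / 46) * (\<Sum>i<K - 1. t ^ i)"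
    unfolding sum_distrib_left by (rule sum.cong) (simp_all add: power_Suc)
  also have "\<dots> = \<nu> * (t * 2 ^ (K - 1) * geom_quot t K * G) / 46"
    by (simp add: geom_quot_eq_sum)
  also have "\<dots> \<le> \<nu> * (8 * real n + 2 * \<bar>\<alpha>\<bar>) / 46"
  proof -
    have "t * 2 ^ (K - 1) * geom_quot t K * G \<le> 8 * real n + 2 * \<bar>\<alpha>\<bar>"
      using assms by (simp add: large_degree_def t_def G_def algebra_simps)
    with nu_pos show ?thesis
      by (intro divide_right_mono mult_left_mono) auto
  qed
  finally show ?thesis .
qed

lemma backward_bound_at_root:
  assumes "large_degree n" and n: "n = Suc (Suc N)" and root: "poly (monic_laguerre \<alpha> (Suc N)) y = 0"
    and "i < K - 1"
  shows "\<bar>poly (monic_laguerre \<alpha> (N - i)) y\<bar> \<le> 2 ^ i * \<bar>poly (monic_laguerre \<alpha> N) y\<bar>"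
proof -
  have n9: "real n \<ge> 9" and nK: "n \<ge> 2 * K"
    using assms(1) large_degree_ge_9 by (auto simp: large_degree_def)
  have y: "0 < y" "y < 4 * real n + 2 * \<alpha> - 6"
    using monic_laguerre_root_bounds[OF alpha_gt root] n n9 alpha_gt by auto
  have "\<bar>y - (2 * real m + \<alpha> + 1)\<bar> + 1 \<le> 2 * (real m * (real m + \<alpha>))"
    if "N - (K - 2) < m" "m \<le> N" for m
    by (rule recurrence_doubling_condition[OF alpha_gt n9 _ y]) (use that n nK alpha_gt in auto)
  then show ?thesis
    using monic_laguerre_backward_bound[OF root, of "K - 2" i] assms(4) n nK by auto
qed

lemma poly_q_at_laguerre_root:
  assumes n: "n = Suc (Suc N)" and root: "poly (monic_laguerre \<alpha> (Suc N)) y = 0"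
  shows "poly (q n) y = - (\<rho> n * (real (Suc N) * (real (Suc N) + \<alpha>)) * poly (monic_laguerre \<alpha> N) y)
    + (\<Sum>i<K - 1. \<gamma> (i + 2) * \<rho> (n - (i + 2)) * poly (monic_laguerre \<alpha> (N - i)) y)"
proof -
  define f where "f j = \<gamma> j * \<rho> (n - j) * poly (monic_laguerre \<alpha> (n - j)) y" for j
  have "poly (q n) y = f 0 + f 1 + (\<Sum>i<K - 1. f (i + 2))"
    unfolding f_def q_eq poly_sum poly_smult by (rule sum_atMost_split_first_two[OF K_pos])
  moreover have "f 0 = - (\<rho> n * (real (Suc N) * (real (Suc N) + \<alpha>)) * poly (monic_laguerre \<alpha> N) y)"
    using root by (simp add: f_def n gamma_0 poly_monic_laguerre_recurrence)
  moreover have "f 1 = 0"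
    using root by (simp add: f_def n)
  moreover have "f (i + 2) = \<gamma> (i + 2) * \<rho> (n - (i + 2)) * poly (monic_laguerre \<alpha> (N - i)) y" for i
    by (simp add: f_def n)
  ultimately show ?thesis by simp
qed

lemma tail_at_laguerre_root_lt:
  assumes large: "large_degree n" and n: "n = Suc (Suc N)"
    and root: "poly (monic_laguerre \<alpha> (Suc N)) y = 0" and nz: "poly (monic_laguerre \<alpha> N) y \<noteq> 0"
  shows "\<bar>\<Sum>i<K - 1. \<gamma> (i + 2) * \<rho> (n - (i + 2)) * poly (monic_laguerre \<alpha> (N - i)) y\<bar>
    < \<rho> n * (real (Suc N) * (real (Suc N) + \<alpha>)) * \<bar>poly (monic_laguerre \<alpha> N) y\<bar>"
proof -
  define A where "A = \<bar>poly (monic_laguerre \<alpha> N) y\<bar>"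
  have n9: "real n \<ge> 9" and nK: "n \<ge> 2 * K"
    using large large_degree_ge_9 by (auto simp: large_degree_def)
  have "A > 0" "\<rho> n > 0"
    using nz rho_pos by (auto simp: A_def)
  have "\<bar>\<Sum>i<K - 1. \<gamma> (i + 2) * \<rho> (n - (i + 2)) * poly (monic_laguerre \<alpha> (N - i)) y\<bar>
      \<le> (\<Sum>i<K - 1. \<bar>\<gamma> (i + 2)\<bar> * (\<nu> ^ (i + 2) * \<rho> n) * (2 ^ i * A))"
  proof (rule order_trans[OF sum_abs sum_mono])
    fix i assume "i \<in> {..<K - 1}"
    then have "\<rho> (n - (i + 2)) \<le> \<nu> ^ (i + 2) * \<rho> n"
        "\<bar>poly (monic_laguerre \<alpha> (N - i)) y\<bar> \<le> 2 ^ i * A"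
      using rho_diff_le[of "i + 2" n] backward_bound_at_root[OF large n root, of i] nK
      by (auto simp: A_def)
    then show "\<bar>\<gamma> (i + 2) * \<rho> (n - (i + 2)) * poly (monic_laguerre \<alpha> (N - i)) y\<bar>
        \<le> \<bar>\<gamma> (i + 2)\<bar> * (\<nu> ^ (i + 2) * \<rho> n) * (2 ^ i * A)"
      using rho_pos[of "n - (i + 2)"] by (simp add: abs_mult mult_mono)
  qed
  also have "\<dots> = (\<Sum>i<K - 1. \<bar>\<gamma> (i + 2)\<bar> * \<nu> ^ (i + 2) * 2 ^ i) * (\<rho> n * A)"
    unfolding sum_distrib_right by (rule sum.cong) (simp_all add: algebra_simps)
  also have "\<dots> \<le> \<nu> * (8 * real n + 2 * \<bar>\<alpha>\<bar>) / 46 * (\<rho> n * A)"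
    using tail_sum_bound[OF large] \<open>A > 0\<close> \<open>\<rho> n > 0\<close> by (intro mult_right_mono) auto
  also have "\<dots> < real (Suc N) * (real (Suc N) + \<alpha>) * (\<rho> n * A)"
  proof -
    have "\<nu> * (8 * real n + 2 * \<bar>\<alpha>\<bar>) / 46 < real (Suc N) * (real (Suc N) + \<alpha>)"
      using leading_term_dominates[OF alpha_gt _ _ n9] large by (simp add: n large_degree_def)
    with \<open>A > 0\<close> \<open>\<rho> n > 0\<close> show ?thesis
      by (intro mult_strict_right_mono) auto
  qed
  finally show ?thesis
    by (simp add: A_def algebra_simps)
qed

lemma sgn_q_at_laguerre_root:
  assumes large: "large_degree n" and n: "n = Suc (Suc N)"
    and root: "poly (monic_laguerre \<alpha> (Suc N)) y = 0" and nz: "poly (monic_laguerre \<alpha> N) y \<noteq> 0"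
  shows "sgn (poly (q n) y) = - sgn (poly (monic_laguerre \<alpha> N) y)"
proof -
  define C where "C = real (Suc N) * (real (Suc N) + \<alpha>)"
  define L where "L = poly (monic_laguerre \<alpha> N) y"
  define E where "E = (\<Sum>i<K - 1. \<gamma> (i + 2) * \<rho> (n - (i + 2)) * poly (monic_laguerre \<alpha> (N - i)) y)"
  have "C > 0" "\<rho> n > 0"
    using alpha_gt rho_pos by (auto simp: C_def)
  have "\<bar>E\<bar> < \<bar>- (\<rho> n * C * L)\<bar>"
    using tail_at_laguerre_root_lt[OF assms, folded C_def E_def L_def] \<open>C > 0\<close> \<open>\<rho> n > 0\<close>
    by (simp add: abs_mult)
  moreover have "poly (q n) y = - (\<rho> n * C * L) + E"
    using poly_q_at_laguerre_root[OF n root] by (simp only: C_def E_def L_def)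
  ultimately have "sgn (poly (q n) y) = sgn (- (\<rho> n * C * L))"
    by (simp only: sgn_add_dominated)
  with \<open>C > 0\<close> \<open>\<rho> n > 0\<close> show ?thesis
    by (simp add: sgn_mult L_def)
qed

lemma q_roots_interleave:
  assumes large: "large_degree n"
  shows "\<exists>xs ys. interleaves xs ys \<and> q n = smult (\<rho> n) (poly_of_roots xs)
    \<and> monic_laguerre \<alpha> (n - 1) = poly_of_roots ys"
proof -
  define N where "N = n - 2"
  have n: "n = Suc (Suc N)"
    using large_degree_ge_9[OF large] by (simp add: N_def)
  obtain ys where ys: "length ys = Suc N" "sorted_wrt (<) ys" "monic_laguerre \<alpha> (Suc N) = poly_of_roots ys"
      "sign_alternates (- monic_laguerre \<alpha> N) ys"
    using monic_laguerre_real_roots[OF alpha_gt, of "Suc N"] by auto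
  have alt: "sign_alternates (q n) ys"
    unfolding sign_alternates_def
  proof (intro allI impI)
    fix k assume "k < length ys"
    then have "poly (monic_laguerre \<alpha> (Suc N)) (ys ! k) = 0"
        "sgn (poly (- monic_laguerre \<alpha> N) (ys ! k)) = (-1) ^ (length ys - k)"
      using ys(3,4) by (simp_all add: poly_of_roots_eq_0_iff sign_alternates_def)
    then show "sgn (poly (q n) (ys ! k)) = (-1) ^ (length ys - k)"
      using sgn_q_at_laguerre_root[OF large n] by (fastforce simp: sgn_0_0)
  qed
  have "K \<le> n"
    using large by (simp add: large_degree_def)
  then have deg: "degree (q n) = Suc (length ys)"
    by (simp add: degree_q ys(1) n)
  obtain xs where "interleaves xs ys" "q n = smult (\<rho> n) (poly_of_roots xs)"
    using real_roots_interleaving[OF ys(2) deg _ alt] lead_coeff_q[OF \<open>K \<le> n\<close>] rho_pos[of n] by auto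
  with ys(3) n show ?thesis by auto
qed

lemma poly_q_at_0:
  assumes "K \<le> n"
  shows "(-1) ^ n * poly (q n) 0 = \<rho> n * pochhammer (\<alpha> + 1) n
    + (\<Sum>j<K. \<gamma> (Suc j) * (-1) ^ Suc j * (\<rho> (n - Suc j) * pochhammer (\<alpha> + 1) (n - Suc j)))"
proof -
  define g where "g j = \<gamma> j * (-1) ^ j * (\<rho> (n - j) * pochhammer (\<alpha> + 1) (n - j))" for j
  have "(-1) ^ n * poly (q n) 0 = (\<Sum>j\<le>K. g j)"
    unfolding q_eq poly_sum poly_smult sum_distrib_left
  proof (rule sum.cong)
    fix j assume "j \<in> {..K}"
    then have "(-1::real) ^ n = (-1) ^ j * (-1) ^ (n - j)"
      using assms by (simp flip: power_add)
    then show "(-1) ^ n * (\<gamma> j * \<rho> (n - j) * poly (monic_laguerre \<alpha> (n - j)) 0) = g j"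
      by (simp add: g_def poly_monic_laguerre_at_0)
  qed simp
  then show ?thesis
    by (simp add: sum.atMost_shift g_def gamma_0)
qed

lemma rho_pochhammer_diff_le:
  assumes "j \<le> K" and "K \<le> n" and "0 < M" and "M \<le> real n - real K + 1 + \<alpha>"
  shows "\<rho> (n - j) * pochhammer (\<alpha> + 1) (n - j) \<le> (\<nu> / M) ^ j * (\<rho> n * pochhammer (\<alpha> + 1) n)"
proof -
  have "M ^ j * pochhammer (\<alpha> + 1) (n - j) \<le> pochhammer (\<alpha> + 1) n"
    using pochhammer_shift_ge[OF alpha_gt, of M "n - j" j] assms by (simp add: of_nat_diff)
  then have "\<rho> (n - j) * (M ^ j * pochhammer (\<alpha> + 1) (n - j)) \<le> (\<nu> ^ j * \<rho> n) * pochhammer (\<alpha> + 1) n"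
    using rho_diff_le[of j n] assms rho_pos nu_pos alpha_gt
    by (intro mult_mono) (auto simp: less_imp_le pochhammer_pos)
  then show ?thesis
    using assms(3) by (simp add: power_divide pos_le_divide_eq field_simps)
qed

lemma sign_q_at_0:
  assumes "K \<le> n" and big: "\<nu> * (1 + (\<Sum>j\<le>K. \<bar>\<gamma> j\<bar>)) < real n - real K + 1 + \<alpha>"
  shows "(-1) ^ n * poly (q n) 0 > 0"
proof -
  define M where "M = real n - real K + 1 + \<alpha>"
  define G where "G = (\<Sum>j\<le>K. \<bar>\<gamma> j\<bar>)"
  define X where "X = \<rho> n * pochhammer (\<alpha> + 1) n"
  have "G \<ge> 0"
    by (simp add: G_def sum_nonneg)
  then have "\<nu> * G \<ge> 0"
    using nu_pos by simp
  moreover have "\<nu> + \<nu> * G < M"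
    using big by (simp add: M_def G_def distrib_left)
  ultimately have "\<nu> < M" "\<nu> * G < M"
    using nu_pos by linarith+
  then have "M > 0" "\<nu> / M < 1"
    using nu_pos by auto
  have "X > 0"
    using alpha_gt rho_pos[of n] by (simp add: X_def pochhammer_pos)
  have "\<bar>\<gamma> (Suc j) * (-1) ^ Suc j * (\<rho> (n - Suc j) * pochhammer (\<alpha> + 1) (n - Suc j))\<bar>
      \<le> \<bar>\<gamma> (Suc j)\<bar> * ((\<nu> / M) * X)" if "j < K" for j
  proof -
    have "(\<nu> / M) ^ Suc j \<le> \<nu> / M"
      unfolding power_Suc using \<open>\<nu> / M < 1\<close> \<open>M > 0\<close> nu_pos
      by (intro mult_left_le power_le_one) auto
    then have "\<rho> (n - Suc j) * pochhammer (\<alpha> + 1) (n - Suc j) \<le> (\<nu> / M) * X"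
      using rho_pochhammer_diff_le[of "Suc j" n M] that assms(1) \<open>M > 0\<close> \<open>X > 0\<close>
      by (smt (verit) M_def X_def mult_right_mono Suc_leI)
    moreover have "\<bar>\<gamma> (Suc j) * (-1) ^ Suc j * (\<rho> (n - Suc j) * pochhammer (\<alpha> + 1) (n - Suc j))\<bar>
        = \<bar>\<gamma> (Suc j)\<bar> * (\<rho> (n - Suc j) * pochhammer (\<alpha> + 1) (n - Suc j))"
      using rho_pos[of "n - Suc j"] pochhammer_pos[of "\<alpha> + 1" "n - Suc j"] alpha_gt by (simp add: abs_mult)
    ultimately show ?thesis
      by (metis abs_ge_zero mult_left_mono)
  qed
  then have "\<bar>\<Sum>j<K. \<gamma> (Suc j) * (-1) ^ Suc j * (\<rho> (n - Suc j) * pochhammer (\<alpha> + 1) (n - Suc j))\<bar>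
      \<le> (\<Sum>j<K. \<bar>\<gamma> (Suc j)\<bar>) * ((\<nu> / M) * X)"
    unfolding sum_distrib_right by (intro order_trans[OF sum_abs sum_mono]) auto
  also have "\<dots> \<le> G * ((\<nu> / M) * X)"
    using \<open>M > 0\<close> \<open>X > 0\<close> nu_pos by (intro mult_right_mono) (auto simp: G_def sum.atMost_shift)
  also have "\<dots> < X"
    using \<open>\<nu> * G < M\<close> \<open>M > 0\<close> \<open>X > 0\<close> by (simp add: field_simps)
  finally show ?thesis
    using poly_q_at_0[OF assms(1)] by (simp add: X_def)
qed

lemma q_zeros_real_simple:
  assumes "large_degree n" and "poly (map_poly complex_of_real (q n)) z = 0"
  shows "z \<in> \<real> \<and> order z (map_poly complex_of_real (q n)) = 1"
proof -
  obtain xs ys where xs: "interleaves xs ys" "q n = smult (\<rho> n) (poly_of_roots xs)"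
    using q_roots_interleave[OF assms(1)] by blast
  have "\<rho> n \<noteq> 0" "distinct xs"
    using rho_pos[of n] interleaves_sorted[OF xs(1)] by (auto simp: strict_sorted_iff)
  moreover have "z \<in> complex_of_real ` set xs"
    using assms(2) complex_zeros_smult_poly_of_roots[OF \<open>\<rho> n \<noteq> 0\<close>] xs(2) by simp
  ultimately show ?thesis
    using order_smult_poly_of_roots xs(2) by auto
qed

lemma q_zeros_interlace:
  assumes "large_degree n"
  shows "interlaces {x. poly (q n) x = 0} {x. poly (laguerre \<alpha> (n - 1)) x = 0}"
proof -
  obtain xs ys where xs: "interleaves xs ys" "q n = smult (\<rho> n) (poly_of_roots xs)"
      "monic_laguerre \<alpha> (n - 1) = poly_of_roots ys"
    using q_roots_interleave[OF assms] by blast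
  have "ys \<noteq> []"
    using large_degree_ge_9[OF assms] xs(3) degree_monic_laguerre[of \<alpha> "n - 1"] by auto
  moreover have "{x. poly (q n) x = 0} = set xs"
    unfolding xs(2) by (rule zeros_smult_poly_of_roots) (use rho_pos[of n] in simp)
  moreover have "{x. poly (laguerre \<alpha> (n - 1)) x = 0} = set ys"
    using xs(3) zeros_smult_poly_of_roots[of 1 ys] by (simp add: zeros_laguerre)
  ultimately show ?thesis
    using interlaces_interleaves[OF xs(1)] by simp
qed

lemma q_zeros_pos:
  assumes large: "large_degree n" and big: "\<nu> * (1 + (\<Sum>j\<le>K. \<bar>\<gamma> j\<bar>)) < real n - real K + 1 + \<alpha>"
    and z: "poly (map_poly complex_of_real (q n)) z = 0"
  shows "z \<in> \<real> \<and> Re z > 0"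
proof -
  obtain xs ys where xs: "interleaves xs ys" "q n = smult (\<rho> n) (poly_of_roots xs)"
      "monic_laguerre \<alpha> (n - 1) = poly_of_roots ys"
    using q_roots_interleave[OF large] by blast
  have "K \<le> n" "length xs = n"
    using large xs(2) rho_pos[of n] degree_q[of n] by (auto simp: large_degree_def)
  have "\<forall>y\<in>set ys. y > 0"
    using monic_laguerre_root_bounds(1)[OF alpha_gt, of "n - 2"] large_degree_ge_9[OF large] xs(3)
    by (auto simp: poly_of_roots_eq_0_iff numeral_2_eq_2 Suc_diff_Suc)
  moreover have "(-1) ^ length xs * poly (poly_of_roots xs) 0 > 0"
  proof -
    have "\<rho> n * ((-1) ^ n * poly (poly_of_roots xs) 0) > 0"
      using sign_q_at_0[OF \<open>K \<le> n\<close> big] xs(2) by (simp add: mult.left_commute)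
    with rho_pos[of n] \<open>length xs = n\<close> show ?thesis
      by (metis zero_less_mult_pos)
  qed
  ultimately have "\<forall>x\<in>set xs. x > 0"
    by (rule interleaved_roots_pos[OF xs(1)])
  moreover have "z \<in> complex_of_real ` set xs"
    using z xs(2) complex_zeros_smult_poly_of_roots[of "\<rho> n"] rho_pos[of n] by simp
  ultimately show ?thesis
    by auto
qed

lemma eventually_q_zeros_pos:
  "\<forall>\<^sub>F n in sequentially.
     \<forall>z. poly (map_poly complex_of_real (q n)) z = 0 \<longrightarrow> z \<in> \<real> \<and> Re z > 0"
proof -
  have real_large: "\<forall>\<^sub>F n in sequentially. c < real n" for c
    using filterlim_real_sequentially by (simp add: filterlim_at_top_dense)
  have "\<forall>\<^sub>F n in sequentially.
      (23 * \<nu> * 2 ^ (K - 1) * geom_quot (23 * \<nu>) K * tail_coeff_max - 2 * \<bar>\<alpha>\<bar>) / 8 < real n \<and>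
      (\<nu> - \<alpha> + 1) / 2 < real n \<and> \<alpha> + 9 < real n \<and> 2 * K \<le> n \<and>
      \<nu> * (1 + (\<Sum>j\<le>K. \<bar>\<gamma> j\<bar>)) + real K - 1 - \<alpha> < real n"
    by (intro eventually_conj real_large eventually_ge_at_top)
  then have "\<forall>\<^sub>F n in sequentially.
      large_degree n \<and> \<nu> * (1 + (\<Sum>j\<le>K. \<bar>\<gamma> j\<bar>)) < real n - real K + 1 + \<alpha>"
    by eventually_elim (auto simp: large_degree_def)
  then show ?thesis
    by eventually_elim (use q_zeros_pos in blast)
qed

end

theorem mainTheorem7:
  fixes \<alpha> \<nu> :: real and \<rho> \<gamma> :: "nat \<Rightarrow> real" and K :: nat and q :: "nat \<Rightarrow> real poly"
  assumes "\<alpha> > -1"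
    and "\<forall>n. \<rho> n > 0"
    and "\<nu> > 0"
    and "\<forall>n\<ge>1. \<rho> (n - 1) / \<rho> n \<le> \<nu>"
    and "K > 0"
    and "\<gamma> 0 = 1" and "\<gamma> K \<noteq> 0"
    and "\<And>n. q n = (\<Sum>j\<le>K. smult (\<gamma> j * \<rho> (n - j)) (monic_laguerre \<alpha> (n - j)))"
  defines "\<Gamma>2 \<equiv> Max {\<bar>\<gamma> j\<bar> | j. 2 \<le> j \<and> j \<le> K}"
  shows "(\<forall>n::nat.
            real n \<ge> (23 * \<nu> * 2 ^ (K - 1) * geom_quot (23 * \<nu>) K * \<Gamma>2 - 2 * \<bar>\<alpha>\<bar>) / 8 \<and>
            real n \<ge> (\<nu> - \<alpha> + 1) / 2 \<and> real n \<ge> \<alpha> + 9 \<and> n \<ge> 2 * K \<longrightarrow>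
              (\<forall>z::complex. poly (map_poly complex_of_real (q n)) z = 0 \<longrightarrow>
                  z \<in> \<real> \<and> order z (map_poly complex_of_real (q n)) = 1) \<and>
              interlaces {x. poly (q n) x = 0} {x. poly (laguerre \<alpha> (n - 1)) x = 0})
       \<and> (\<forall>\<^sub>F n in sequentially. \<forall>z::complex. poly (map_poly complex_of_real (q n)) z = 0 \<longrightarrow>
              z \<in> \<real> \<and> Re z > 0)"
proof -
  interpret laguerre_combination \<alpha> \<nu> \<rho> \<gamma> K q
  proof
    show "\<rho> n \<le> \<nu> * \<rho> (Suc n)" for n
      using assms(2) assms(4)[rule_format, of "Suc n"] by (simp add: pos_divide_le_eq)
  qed (use assms in auto)
  \<comment> \<open>The hypothesis \<open>\<gamma> K \<noteq> 0\<close> only normalises \<open>K\<close>; the argument does not need it.\<close>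
  have "\<Gamma>2 = tail_coeff_max"
    by (simp add: \<Gamma>2_def tail_coeff_max_def)
  then show ?thesis
    using q_zeros_real_simple q_zeros_interlace eventually_q_zeros_pos
    by (auto simp: large_degree_def)
qed

end
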